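(* There exists a constant $M>0$ such that for all $t\ge s\ge0$, \[ |K_1(t,s)|\le M\,E(t,s)\quad\text{and}\quad |K_2(t,s)|\le M\,E(t,s), \] where $K_1(t,s)=\omega^2R(t,s)-\partial_sR(t,s)$ and $K_2(t,s)=\omega^2\partial_tR(t,s)-\partial_t\partial_sR(t,s)$.
   Context: Standing assumptions: $\omega>0$ is a constant; $p\in C^1([0,\infty))$ with $p(t)>0$ and $p'(t)<0$ for all $t\ge0$, $\int_0^\infty p(t)\,dt=\infty$ and $\int_0^\infty p(t)^2\,dt<\infty$. Notation: $E(t,s)=\exp(-\frac12\int_s^tp(\tau)\,d\tau)$ for $0\le s\le t$; $q(t)=-\frac14p(t)^2-\frac12p'(t)$. For each $s\ge0$, $t\mapsto G_u(t,s)$ ($t\ge s$) is the solution of $\partial_t^2G_u+(\omega^2+q(t))G_u=0$ with $G_u(s,s)=0$, $\partial_tG_u(t,s)|_{t=s}=1$; $R(t,s)=E(t,s)G_u(t,s)$. *)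

theory Defs
  imports "HOL-Analysis.Analysis"
begin

definition Eker :: "(real \<Rightarrow> real) \<Rightarrow> real \<Rightarrow> real \<Rightarrow> real" where
  "Eker p t s = exp (- (1/2) * (integral {0..t} p - integral {0..s} p))"

definition qfun :: "(real \<Rightarrow> real) \<Rightarrow> (real \<Rightarrow> real) \<Rightarrow> real \<Rightarrow> real" where
  "qfun p p' t = - (1/4) * (p t)^2 - (1/2) * p' t"

definition Rker :: "(real \<Rightarrow> real) \<Rightarrow> (real \<Rightarrow> real \<Rightarrow> real) \<Rightarrow> real \<Rightarrow> real \<Rightarrow> real" where
  "Rker p G t s = Eker p t s * G t s"

end

theory Submission
  imports Defs
begin

text \<open>
  Writing \<open>\<partial>\<^sub>sR = E (p(s)/2 G\<^sub>u + \<partial>\<^sub>sG\<^sub>u)\<close> and \<open>\<partial>\<^sub>tR = E (\<partial>\<^sub>tG\<^sub>u - p(t)/2 G\<^sub>u)\<close>,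
  both \<open>K\<^sub>1\<close> and \<open>K\<^sub>2\<close> are \<open>E(t,s)\<close> times polynomials in \<open>p(s)\<close>, \<open>p(t)\<close> and the four
  functions \<open>G\<^sub>u, \<partial>\<^sub>tG\<^sub>u, \<partial>\<^sub>sG\<^sub>u, \<partial>\<^sub>t\<partial>\<^sub>sG\<^sub>u\<close>. As \<open>p\<close> is positive and decreasing it is
  bounded by \<open>p(0)\<close>, so it suffices to bound those four functions uniformly.

  Every solution of \<open>y'' + (\<omega>\<^sup>2 + q) y = 0\<close> is bounded together with \<open>y'\<close>: the energy
  \<open>V = y'\<^sup>2 + \<omega>\<^sup>2 y\<^sup>2\<close> satisfies \<open>V' = -2 q y y' \<le> (|q|/\<omega>) V\<close>, and
  \<open>|q| \<le> p\<^sup>2/4 - p'/2\<close> has a bounded primitive because \<open>p\<^sup>2\<close> is integrable and \<open>p\<close> is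
  monotone. Finally \<open>G\<^sub>u(t,s) = (u(s) v(t) - v(s) u(t)) / W\<close> for a fixed fundamental
  system \<open>u, v\<close> with Wronskian \<open>W\<close>, which makes the \<open>s\<close>-derivatives explicit and
  bounded as well.
\<close>

lemma abs_mult_le_mult:
  fixes a b A B :: "'a :: linordered_idom"
  assumes "\<bar>a\<bar> \<le> A" "\<bar>b\<bar> \<le> B"
  shows "\<bar>a * b\<bar> \<le> A * B"
  unfolding abs_mult by (rule mult_mono) (use assms in auto)

lemma integral_has_real_derivative_atLeast:
  fixes f :: "real \<Rightarrow> real"
  assumes "continuous_on {0..} f" "0 \<le> x"
  shows "((\<lambda>t. integral {0..t} f) has_real_derivative f x) (at x within {0..})"
proof -
  have "continuous_on {0..x+1} f"
    using assms(1) by (rule continuous_on_subset) auto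
  then have "((\<lambda>t. integral {0..t} f) has_real_derivative f x) (at x within {0..x+1})"
    using assms(2) by (auto intro: integral_has_real_derivative)
  moreover have "at x within {0..x+1} = at x within {0..}"
    by (rule at_within_nhd[of x "{..<x+1}"]) (use assms(2) in auto)
  ultimately show ?thesis by simp
qed

lemma DERIV_nonpos_imp_antimono_atLeast:
  fixes f f' :: "real \<Rightarrow> real"
  assumes f': "\<And>x. 0 \<le> x \<Longrightarrow> (f has_real_derivative f' x) (at x within {0..})"
    and nonpos: "\<And>x. 0 \<le> x \<Longrightarrow> f' x \<le> 0"
    and "0 \<le> a" "a \<le> b"
  shows "f b \<le> f a"
proof (rule DERIV_nonpos_imp_decreasing_open[OF \<open>a \<le> b\<close>])
  fix x assume x: "a < x" "x < b"
  have "at x within {0..} = at x"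
    by (rule at_within_open_subset[of x "{0<..}"]) (use x \<open>0 \<le> a\<close> in auto)
  then show "\<exists>y. DERIV f x :> y \<and> y \<le> 0"
    using f'[of x] nonpos[of x] x \<open>0 \<le> a\<close> by auto
next
  have "continuous_on {0..} f"
    by (rule DERIV_continuous_on[where D = f']) (use f' in auto)
  then show "continuous_on {a..b} f"
    by (rule continuous_on_subset) (use \<open>0 \<le> a\<close> in auto)
qed

definition oscillator_solution ::
    "real \<Rightarrow> (real \<Rightarrow> real) \<Rightarrow> (real \<Rightarrow> real) \<Rightarrow> (real \<Rightarrow> real) \<Rightarrow> bool" where
  "oscillator_solution \<omega> Q y y' \<longleftrightarrow>
     (\<forall>t\<ge>0. (y has_real_derivative y' t) (at t within {0..}) \<and>
            (y' has_real_derivative - (\<omega>^2 + Q t) * y t) (at t within {0..}))"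

lemma oscillator_solutionD:
  assumes "oscillator_solution \<omega> Q y y'" "0 \<le> t"
  shows "(y has_real_derivative y' t) (at t within {0..})"
    and "(y' has_real_derivative - (\<omega>^2 + Q t) * y t) (at t within {0..})"
  using assms unfolding oscillator_solution_def by auto

definition wronskian ::
    "(real \<Rightarrow> real) \<Rightarrow> (real \<Rightarrow> real) \<Rightarrow> (real \<Rightarrow> real) \<Rightarrow> (real \<Rightarrow> real) \<Rightarrow> real \<Rightarrow> real" where
  "wronskian y y' z z' = (\<lambda>t. y t * z' t - y' t * z t)"

lemma wronskian_const:
  assumes y: "oscillator_solution \<omega> Q y y'" and z: "oscillator_solution \<omega> Q z z'"
    and "0 \<le> t"
  shows "wronskian y y' z z' t = wronskian y y' z z' 0"
proof -
  have "\<exists>c. \<forall>x\<in>{0..}. wronskian y y' z z' x = c"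
  proof (rule has_field_derivative_zero_constant)
    fix x :: real assume "x \<in> {0..}"
    then show "(wronskian y y' z z' has_real_derivative 0) (at x within {0..})"
      unfolding wronskian_def
      by (auto intro!: derivative_eq_intros oscillator_solutionD[OF y] oscillator_solutionD[OF z]
               simp: algebra_simps)
  qed auto
  then show ?thesis using \<open>0 \<le> t\<close> by force
qed

lemma oscillator_energy_le:
  assumes y: "oscillator_solution \<omega> Q y y'" and "\<omega> > 0"
    and H: "\<And>t. 0 \<le> t \<Longrightarrow> (H has_real_derivative h t) (at t within {0..})"
    and Q_le: "\<And>t. 0 \<le> t \<Longrightarrow> \<bar>Q t\<bar> \<le> h t"
    and "H 0 = 0" "0 \<le> t"
  shows "(y' t)^2 + (\<omega> * y t)^2 \<le> ((y' 0)^2 + (\<omega> * y 0)^2) * exp (H t / \<omega>)"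
proof -
  \<comment> \<open>Gronwall: \<open>V' \<le> (h/\<omega>) V\<close> since \<open>2 \<omega> |y y'| \<le> V\<close>, so \<open>V exp (-H/\<omega>)\<close> is nonincreasing.\<close>
  define V where "V t = (y' t)^2 + (\<omega> * y t)^2" for t
  have V_deriv: "(V has_real_derivative - 2 * Q t * y t * y' t) (at t within {0..})"
    if "0 \<le> t" for t
    unfolding V_def
    by (rule derivative_eq_intros oscillator_solutionD[OF y that] refl)+
      (simp add: algebra_simps power2_eq_square)
  have V_growth: "- 2 * Q t * y t * y' t \<le> h t * V t / \<omega>" if "0 \<le> t" for t
  proof -
    have "2 * \<omega> * (\<bar>y t\<bar> * \<bar>y' t\<bar>) \<le> V t"
      using zero_le_power2[of "\<omega> * \<bar>y t\<bar> - \<bar>y' t\<bar>"]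
      unfolding V_def by (simp add: power2_eq_square algebra_simps abs_mult_self_eq)
    then have "2 * (\<bar>y t\<bar> * \<bar>y' t\<bar>) \<le> V t / \<omega>"
      using \<open>\<omega> > 0\<close> by (simp add: field_simps)
    then have "\<bar>Q t\<bar> * (2 * (\<bar>y t\<bar> * \<bar>y' t\<bar>)) \<le> h t * (V t / \<omega>)"
      by (rule mult_mono[OF Q_le[OF that]]) (use Q_le[OF that] in auto)
    moreover have "- 2 * Q t * y t * y' t \<le> \<bar>Q t\<bar> * (2 * (\<bar>y t\<bar> * \<bar>y' t\<bar>))"
      using abs_ge_minus_self[of "2 * Q t * y t * y' t"] by (simp add: abs_mult)
    ultimately show ?thesis by simp
  qed
  have "V t * exp (- H t / \<omega>) \<le> V 0 * exp (- H 0 / \<omega>)"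
  proof (rule DERIV_nonpos_imp_antimono_atLeast[OF _ _ order_refl \<open>0 \<le> t\<close>])
    fix x :: real assume "0 \<le> x"
    show "((\<lambda>x. V x * exp (- H x / \<omega>)) has_real_derivative
        (- 2 * Q x * y x * y' x - h x * V x / \<omega>) * exp (- H x / \<omega>)) (at x within {0..})"
      using \<open>0 \<le> x\<close> \<open>\<omega> > 0\<close>
      by (auto intro!: derivative_eq_intros V_deriv H simp: field_simps)
    show "(- 2 * Q x * y x * y' x - h x * V x / \<omega>) * exp (- H x / \<omega>) \<le> 0"
      using V_growth[OF \<open>0 \<le> x\<close>] by (simp add: mult_nonpos_nonneg)
  qed
  then show ?thesis
    using \<open>H 0 = 0\<close> by (simp add: V_def exp_minus field_simps)
qed

lemma oscillator_solution_bounded: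
  assumes y: "oscillator_solution \<omega> Q y y'" and "\<omega> > 0"
    and H: "\<And>t. 0 \<le> t \<Longrightarrow> (H has_real_derivative h t) (at t within {0..})"
    and Q_le: "\<And>t. 0 \<le> t \<Longrightarrow> \<bar>Q t\<bar> \<le> h t"
    and "H 0 = 0" and H_le: "\<And>t. 0 \<le> t \<Longrightarrow> H t \<le> C"
  shows "\<exists>B. \<forall>t\<ge>0. \<bar>y t\<bar> \<le> B \<and> \<bar>y' t\<bar> \<le> B"
proof -
  define D where "D = ((y' 0)^2 + (\<omega> * y 0)^2) * exp (C / \<omega>)"
  have energy_le: "(y' t)^2 + (\<omega> * y t)^2 \<le> D" if "0 \<le> t" for t
  proof -
    have "exp (H t / \<omega>) \<le> exp (C / \<omega>)"
      using H_le[OF that] \<open>\<omega> > 0\<close> by (simp add: divide_right_mono)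
    then show ?thesis
      using oscillator_energy_le[OF y \<open>\<omega> > 0\<close> H Q_le \<open>H 0 = 0\<close> that] unfolding D_def
      by (meson add_nonneg_nonneg mult_left_mono order_trans zero_le_power2)
  qed
  have "\<bar>y t\<bar> \<le> sqrt D / \<omega> \<and> \<bar>y' t\<bar> \<le> sqrt D" if "0 \<le> t" for t
  proof
    show "\<bar>y' t\<bar> \<le> sqrt D"
      by (rule order_trans[OF real_sqrt_ge_abs1 real_sqrt_le_mono[OF energy_le[OF that]]])
    have "\<bar>\<omega> * y t\<bar> \<le> sqrt D"
      by (rule order_trans[OF real_sqrt_ge_abs2 real_sqrt_le_mono[OF energy_le[OF that]]])
    then show "\<bar>y t\<bar> \<le> sqrt D / \<omega>"
      using \<open>\<omega> > 0\<close> by (simp add: abs_mult field_simps)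
  qed
  then show ?thesis
    by (metis max.cobounded1 max.cobounded2 order_trans)
qed

lemma qfun_oscillator_solution_bounded:
  assumes y: "oscillator_solution \<omega> (qfun p p') y y'" and "\<omega> > 0"
    and p': "\<And>t. 0 \<le> t \<Longrightarrow> (p has_real_derivative p' t) (at t within {0..})"
    and p_nonneg: "\<And>t. 0 \<le> t \<Longrightarrow> 0 \<le> p t"
    and p'_nonpos: "\<And>t. 0 \<le> t \<Longrightarrow> p' t \<le> 0"
    and p_sq_int: "(\<lambda>t. (p t)^2) integrable_on {0..}"
  shows "\<exists>B. \<forall>t\<ge>0. \<bar>y t\<bar> \<le> B \<and> \<bar>y' t\<bar> \<le> B"
proof -
  have p_sq_cont: "continuous_on {0..} (\<lambda>t. (p t)^2)"
    by (intro continuous_intros DERIV_continuous_on[where D = p']) (use p' in auto)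
  define H where "H t = integral {0..t} (\<lambda>t. (p t)^2) / 4 + (p 0 - p t) / 2" for t
  show ?thesis
  proof (rule oscillator_solution_bounded[OF y \<open>\<omega> > 0\<close>])
    show "(H has_real_derivative (p t)^2 / 4 - p' t / 2) (at t within {0..})" if "0 \<le> t" for t
      unfolding H_def using that
      by (auto intro!: derivative_eq_intros integral_has_real_derivative_atLeast[OF p_sq_cont] p')
    show "\<bar>qfun p p' t\<bar> \<le> (p t)^2 / 4 - p' t / 2" if "0 \<le> t" for t
      using p'_nonpos[OF that] unfolding qfun_def by (simp add: abs_le_iff)
    show "H 0 = 0" unfolding H_def by simp
    show "H t \<le> integral {0..} (\<lambda>t. (p t)^2) / 4 + p 0 / 2" if "0 \<le> t" for t
    proof -
      have "integral {0..t} (\<lambda>t. (p t)^2) \<le> integral {0..} (\<lambda>t. (p t)^2)"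
        by (rule integral_subset_le)
          (auto intro!: integrable_continuous_real continuous_on_subset[OF p_sq_cont] p_sq_int)
      then show ?thesis
        using p_nonneg[OF that] unfolding H_def by (simp add: field_simps)
    qed
  qed
qed

lemma oscillator_solution_wronskian_combination:
  assumes y: "oscillator_solution \<omega> Q y y'"
    and u: "oscillator_solution \<omega> Q u u'" and v: "oscillator_solution \<omega> Q v v'"
    and "0 \<le> s" "y s = 0" "y' s = 1" "0 \<le> t"
  shows "y t * wronskian u u' v v' 0 = u s * v t - v s * u t"
    and "y' t * wronskian u u' v v' 0 = u s * v' t - v s * u' t"
proof -
  have yu: "wronskian y y' u u' t = - u s"
    using wronskian_const[OF y u \<open>0 \<le> t\<close>] wronskian_const[OF y u \<open>0 \<le> s\<close>] \<open>y s = 0\<close> \<open>y' s = 1\<close>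
    by (simp add: wronskian_def)
  have yv: "wronskian y y' v v' t = - v s"
    using wronskian_const[OF y v \<open>0 \<le> t\<close>] wronskian_const[OF y v \<open>0 \<le> s\<close>] \<open>y s = 0\<close> \<open>y' s = 1\<close>
    by (simp add: wronskian_def)
  have uv: "wronskian u u' v v' t = wronskian u u' v v' 0"
    by (rule wronskian_const[OF u v \<open>0 \<le> t\<close>])
  from yu yv uv show "y t * wronskian u u' v v' 0 = u s * v t - v s * u t"
    unfolding wronskian_def by algebra
  from yu yv uv show "y' t * wronskian u u' v v' 0 = u s * v' t - v s * u' t"
    unfolding wronskian_def by algebra
qed

lemma has_real_derivative_nonzero_imp_nonzero_atLeast:
  fixes y :: "real \<Rightarrow> real"
  assumes "(y has_real_derivative d) (at 0 within {0..})" "d \<noteq> 0"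
  obtains s where "0 \<le> s" "y s \<noteq> 0"
proof (rule ccontr)
  assume "\<not> thesis"
  with that have "y s = 0" if "0 \<le> s" for s
    using that by blast
  then have "(y has_real_derivative 0) (at 0 within {0..})"
    by (intro has_field_derivative_transform_within[OF DERIV_const, where d = 1]) auto
  with assms show False
    using has_field_derivative_unique by (fastforce simp: at_within_Ici_at_right)
qed

lemma green_function_wronskian_representation:
  assumes sol: "\<And>s. 0 \<le> s \<Longrightarrow> oscillator_solution \<omega> Q (\<lambda>t. G t s) (\<lambda>t. G1 t s)"
    and G_init: "\<And>s. 0 \<le> s \<Longrightarrow> G s s = 0" and G1_init: "\<And>s. 0 \<le> s \<Longrightarrow> G1 s s = 1"
  obtains u u' v v' W where
    "oscillator_solution \<omega> Q u u'" "oscillator_solution \<omega> Q v v'" "W \<noteq> 0"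
    "\<And>t s. 0 \<le> s \<Longrightarrow> 0 \<le> t \<Longrightarrow> G t s = (u s * v t - v s * u t) / W"
    "\<And>t s. 0 \<le> s \<Longrightarrow> 0 \<le> t \<Longrightarrow> G1 t s = (u s * v' t - v s * u' t) / W"
proof -
  define u where "u t = G t 0" for t
  define u' where "u' t = G1 t 0" for t
  have u: "oscillator_solution \<omega> Q u u'"
    unfolding u_def u'_def using sol[of 0] by simp
  \<comment> \<open>\<open>u\<close> has slope 1 at 0, so it does not vanish at some \<open>s0\<close>, which is then its
      Wronskian with \<open>G(\<cdot>, s0)\<close>.\<close>
  obtain s0 where "0 \<le> s0" "u s0 \<noteq> 0"
    using has_real_derivative_nonzero_imp_nonzero_atLeast[OF oscillator_solutionD(1)[OF u order_refl]]
    by (auto simp: u'_def G1_init)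
  define v where "v t = G t s0" for t
  define v' where "v' t = G1 t s0" for t
  have v: "oscillator_solution \<omega> Q v v'"
    unfolding v_def v'_def using sol[OF \<open>0 \<le> s0\<close>] by simp
  have "wronskian u u' v v' 0 = u s0"
    using wronskian_const[OF u v \<open>0 \<le> s0\<close>] \<open>0 \<le> s0\<close>
    by (simp add: wronskian_def v_def v'_def G_init G1_init)
  with \<open>u s0 \<noteq> 0\<close> have "wronskian u u' v v' 0 \<noteq> 0" by simp
  then show thesis
    using oscillator_solution_wronskian_combination[OF sol u v _ G_init G1_init]
    by (intro that[OF u v]) (auto simp: eq_divide_eq)
qed

lemma green_function_smooth_bounded:
  assumes sol: "\<And>s. 0 \<le> s \<Longrightarrow> oscillator_solution \<omega> Q (\<lambda>t. G t s) (\<lambda>t. G1 t s)"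
    and G_init: "\<And>s. 0 \<le> s \<Longrightarrow> G s s = 0" and G1_init: "\<And>s. 0 \<le> s \<Longrightarrow> G1 s s = 1"
    and bounded: "\<And>y y'. oscillator_solution \<omega> Q y y' \<Longrightarrow> \<exists>B. \<forall>t\<ge>0. \<bar>y t\<bar> \<le> B \<and> \<bar>y' t\<bar> \<le> B"
  obtains Gs Gst K where
    "\<And>t s. 0 \<le> s \<Longrightarrow> 0 \<le> t \<Longrightarrow> ((\<lambda>\<sigma>. G t \<sigma>) has_real_derivative Gs t s) (at s within {0..})"
    "\<And>t s. 0 \<le> s \<Longrightarrow> 0 \<le> t \<Longrightarrow> ((\<lambda>\<tau>. Gs \<tau> s) has_real_derivative Gst t s) (at t within {0..})"
    "\<And>t s. 0 \<le> s \<Longrightarrow> 0 \<le> t \<Longrightarrow>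
       \<bar>G t s\<bar> \<le> K \<and> \<bar>G1 t s\<bar> \<le> K \<and> \<bar>Gs t s\<bar> \<le> K \<and> \<bar>Gst t s\<bar> \<le> K"
proof -
  obtain u u' v v' W where u: "oscillator_solution \<omega> Q u u'" and v: "oscillator_solution \<omega> Q v v'"
    and "W \<noteq> 0"
    and G_eq: "\<And>t s. 0 \<le> s \<Longrightarrow> 0 \<le> t \<Longrightarrow> G t s = (u s * v t - v s * u t) / W"
    and G1_eq: "\<And>t s. 0 \<le> s \<Longrightarrow> 0 \<le> t \<Longrightarrow> G1 t s = (u s * v' t - v s * u' t) / W"
    using green_function_wronskian_representation[OF sol G_init G1_init] by blast
  define Gs where "Gs t s = (u' s * v t - v' s * u t) / W" for t s
  define Gst where "Gst t s = (u' s * v' t - v' s * u' t) / W" for t s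
  obtain Bu Bv where Bu: "\<And>t. 0 \<le> t \<Longrightarrow> \<bar>u t\<bar> \<le> Bu \<and> \<bar>u' t\<bar> \<le> Bu"
    and Bv: "\<And>t. 0 \<le> t \<Longrightarrow> \<bar>v t\<bar> \<le> Bv \<and> \<bar>v' t\<bar> \<le> Bv"
    using bounded[OF u] bounded[OF v] by auto
  define B where "B = max Bu Bv"
  have B: "\<bar>u t\<bar> \<le> B" "\<bar>u' t\<bar> \<le> B" "\<bar>v t\<bar> \<le> B" "\<bar>v' t\<bar> \<le> B" if "0 \<le> t" for t
    using Bu[OF that] Bv[OF that] unfolding B_def by auto
  have quotient_le: "\<bar>(a * b - c * d) / W\<bar> \<le> 2 * B * B / \<bar>W\<bar>"
    if "\<bar>a\<bar> \<le> B" "\<bar>b\<bar> \<le> B" "\<bar>c\<bar> \<le> B" "\<bar>d\<bar> \<le> B" for a b c d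
  proof -
    have "\<bar>a * b - c * d\<bar> \<le> B * B + B * B"
      using abs_mult_le_mult[OF that(1,2)] abs_mult_le_mult[OF that(3,4)] by linarith
    then show ?thesis by (simp add: abs_divide divide_right_mono)
  qed
  show thesis
  proof (rule that)
    fix t s :: real assume "0 \<le> s" "0 \<le> t"
    have "((\<lambda>\<sigma>. (u \<sigma> * v t - v \<sigma> * u t) / W) has_real_derivative Gs t s) (at s within {0..})"
      unfolding Gs_def using \<open>0 \<le> s\<close> \<open>W \<noteq> 0\<close>
      by (auto intro!: derivative_eq_intros oscillator_solutionD[OF u] oscillator_solutionD[OF v])
    then show "((\<lambda>\<sigma>. G t \<sigma>) has_real_derivative Gs t s) (at s within {0..})"
      by (rule has_field_derivative_transform_within[where d = 1])
        (use \<open>0 \<le> s\<close> \<open>0 \<le> t\<close> G_eq in auto)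
    show "((\<lambda>\<tau>. Gs \<tau> s) has_real_derivative Gst t s) (at t within {0..})"
      unfolding Gs_def Gst_def using \<open>0 \<le> t\<close> \<open>W \<noteq> 0\<close>
      by (auto intro!: derivative_eq_intros oscillator_solutionD[OF u] oscillator_solutionD[OF v])
    show "\<bar>G t s\<bar> \<le> 2 * B * B / \<bar>W\<bar> \<and> \<bar>G1 t s\<bar> \<le> 2 * B * B / \<bar>W\<bar> \<and>
        \<bar>Gs t s\<bar> \<le> 2 * B * B / \<bar>W\<bar> \<and> \<bar>Gst t s\<bar> \<le> 2 * B * B / \<bar>W\<bar>"
      unfolding G_eq[OF \<open>0 \<le> s\<close> \<open>0 \<le> t\<close>] G1_eq[OF \<open>0 \<le> s\<close> \<open>0 \<le> t\<close>] Gs_def Gst_def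
      using \<open>0 \<le> s\<close> \<open>0 \<le> t\<close> by (intro conjI quotient_le B)
  qed
qed

lemma has_real_derivative_Eker_lower:
  assumes "continuous_on {0..} p" "0 \<le> s"
  shows "((\<lambda>\<sigma>. Eker p t \<sigma>) has_real_derivative Eker p t s * p s / 2) (at s within {0..})"
  unfolding Eker_def
  by (auto intro!: derivative_eq_intros integral_has_real_derivative_atLeast assms)

lemma has_real_derivative_Eker_upper:
  assumes "continuous_on {0..} p" "0 \<le> t"
  shows "((\<lambda>\<tau>. Eker p \<tau> s) has_real_derivative - Eker p t s * p t / 2) (at t within {0..})"
  unfolding Eker_def
  by (auto intro!: derivative_eq_intros integral_has_real_derivative_atLeast assms)

definition Rker_ds ::
    "(real \<Rightarrow> real) \<Rightarrow> (real \<Rightarrow> real \<Rightarrow> real) \<Rightarrow> (real \<Rightarrow> real \<Rightarrow> real) \<Rightarrow> real \<Rightarrow> real \<Rightarrow> real" where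
  "Rker_ds p G Gs t s = Eker p t s * (p s / 2 * G t s + Gs t s)"

definition Rker_dt ::
    "(real \<Rightarrow> real) \<Rightarrow> (real \<Rightarrow> real \<Rightarrow> real) \<Rightarrow> (real \<Rightarrow> real \<Rightarrow> real) \<Rightarrow> real \<Rightarrow> real \<Rightarrow> real" where
  "Rker_dt p G G1 t s = Eker p t s * (G1 t s - p t / 2 * G t s)"

definition Rker_dtds ::
    "(real \<Rightarrow> real) \<Rightarrow> (real \<Rightarrow> real \<Rightarrow> real) \<Rightarrow> (real \<Rightarrow> real \<Rightarrow> real) \<Rightarrow> (real \<Rightarrow> real \<Rightarrow> real) \<Rightarrow>
     (real \<Rightarrow> real \<Rightarrow> real) \<Rightarrow> real \<Rightarrow> real \<Rightarrow> real" where
  "Rker_dtds p G G1 Gs Gst t s =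
     Eker p t s * (Gst t s - p t / 2 * Gs t s + p s / 2 * (G1 t s - p t / 2 * G t s))"

lemma Rker_has_partial_derivatives:
  assumes "continuous_on {0..} p" "0 \<le> s" "0 \<le> t"
    and "((\<lambda>\<tau>. G \<tau> s) has_real_derivative G1 t s) (at t within {0..})"
    and "((\<lambda>\<sigma>. G t \<sigma>) has_real_derivative Gs t s) (at s within {0..})"
    and "((\<lambda>\<tau>. Gs \<tau> s) has_real_derivative Gst t s) (at t within {0..})"
  shows "((\<lambda>\<sigma>. Rker p G t \<sigma>) has_real_derivative Rker_ds p G Gs t s) (at s within {0..})"
    and "((\<lambda>\<tau>. Rker p G \<tau> s) has_real_derivative Rker_dt p G G1 t s) (at t within {0..})"
    and "((\<lambda>\<tau>. Rker_ds p G Gs \<tau> s) has_real_derivative Rker_dtds p G G1 Gs Gst t s)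
           (at t within {0..})"
  unfolding Rker_def Rker_ds_def Rker_dt_def Rker_dtds_def using assms
  by (auto intro!: derivative_eq_intros has_real_derivative_Eker_lower has_real_derivative_Eker_upper
      simp: field_simps)

lemma Rker_combinations_le:
  fixes \<omega> P K :: real
  assumes p_le: "\<bar>p s\<bar> \<le> P" "\<bar>p t\<bar> \<le> P"
    and G_le: "\<bar>G t s\<bar> \<le> K" "\<bar>G1 t s\<bar> \<le> K" "\<bar>Gs t s\<bar> \<le> K" "\<bar>Gst t s\<bar> \<le> K"
  defines "M \<equiv> (\<omega>^2 + P) * (P * K + K) + (P * K + K)"
  shows "\<bar>\<omega>^2 * Rker p G t s - Rker_ds p G Gs t s\<bar> \<le> M * Eker p t s"
    and "\<bar>\<omega>^2 * Rker_dt p G G1 t s - Rker_dtds p G G1 Gs Gst t s\<bar> \<le> M * Eker p t s"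
proof -
  have "0 \<le> P" "0 \<le> K" using p_le(1) G_le(1) by linarith+
  have half_p: "\<bar>p s / 2\<bar> \<le> P" "\<bar>p t / 2\<bar> \<le> P"
    using p_le \<open>0 \<le> P\<close> by auto
  have coeff: "\<bar>\<omega>^2 - p s / 2\<bar> \<le> \<omega>^2 + P"
    using half_p(1) zero_le_power2[of \<omega>] by (simp only: abs_le_iff) linarith
  have Gt: "\<bar>G1 t s - p t / 2 * G t s\<bar> \<le> P * K + K"
    using abs_triangle_ineq4[of "G1 t s" "p t / 2 * G t s"]
      abs_mult_le_mult[OF half_p(2) G_le(1)] G_le by linarith
  have Gst: "\<bar>Gst t s - p t / 2 * Gs t s\<bar> \<le> P * K + K"
    using abs_triangle_ineq4[of "Gst t s" "p t / 2 * Gs t s"]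
      abs_mult_le_mult[OF half_p(2) G_le(3)] G_le by linarith
  have "(\<omega>^2 + P) * K \<le> (\<omega>^2 + P) * (P * K + K)"
    using \<open>0 \<le> P\<close> \<open>0 \<le> K\<close> by (intro mult_left_mono) auto
  then have K1: "\<bar>(\<omega>^2 - p s / 2) * G t s - Gs t s\<bar> \<le> M"
    using abs_triangle_ineq4[of "(\<omega>^2 - p s / 2) * G t s" "Gs t s"]
      abs_mult_le_mult[OF coeff G_le(1)] G_le mult_nonneg_nonneg[OF \<open>0 \<le> P\<close> \<open>0 \<le> K\<close>]
    unfolding M_def by linarith
  have K2: "\<bar>(\<omega>^2 - p s / 2) * (G1 t s - p t / 2 * G t s) - (Gst t s - p t / 2 * Gs t s)\<bar> \<le> M"
    using abs_triangle_ineq4[of "(\<omega>^2 - p s / 2) * (G1 t s - p t / 2 * G t s)"]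
      abs_mult_le_mult[OF coeff Gt] Gst unfolding M_def by linarith
  have scaled: "\<bar>Eker p t s * X\<bar> \<le> M * Eker p t s" if "\<bar>X\<bar> \<le> M" for X
    using that by (simp add: Eker_def abs_mult mult.commute)
  have "\<omega>^2 * Rker p G t s - Rker_ds p G Gs t s = Eker p t s * ((\<omega>^2 - p s / 2) * G t s - Gs t s)"
    unfolding Rker_def Rker_ds_def by (simp add: algebra_simps)
  then show "\<bar>\<omega>^2 * Rker p G t s - Rker_ds p G Gs t s\<bar> \<le> M * Eker p t s"
    using scaled[OF K1] by simp
  have "\<omega>^2 * Rker_dt p G G1 t s - Rker_dtds p G G1 Gs Gst t s =
      Eker p t s * ((\<omega>^2 - p s / 2) * (G1 t s - p t / 2 * G t s) - (Gst t s - p t / 2 * Gs t s))"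
    unfolding Rker_dt_def Rker_dtds_def by (simp add: algebra_simps)
  then show "\<bar>\<omega>^2 * Rker_dt p G G1 t s - Rker_dtds p G G1 Gs Gst t s\<bar> \<le> M * Eker p t s"
    using scaled[OF K2] by simp
qed

lemma Rker_partial_derivatives_bounded:
  fixes \<omega> P K :: real
  assumes p_cont: "continuous_on {0..} p" and p_le: "\<And>t. 0 \<le> t \<Longrightarrow> \<bar>p t\<bar> \<le> P"
    and G_deriv: "\<And>t s. 0 \<le> s \<Longrightarrow> 0 \<le> t \<Longrightarrow>
      ((\<lambda>\<tau>. G \<tau> s) has_real_derivative G1 t s) (at t within {0..})"
    and Gs_deriv: "\<And>t s. 0 \<le> s \<Longrightarrow> 0 \<le> t \<Longrightarrow>
      ((\<lambda>\<sigma>. G t \<sigma>) has_real_derivative Gs t s) (at s within {0..})"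
    and Gst_deriv: "\<And>t s. 0 \<le> s \<Longrightarrow> 0 \<le> t \<Longrightarrow>
      ((\<lambda>\<tau>. Gs \<tau> s) has_real_derivative Gst t s) (at t within {0..})"
    and G_le: "\<And>t s. 0 \<le> s \<Longrightarrow> 0 \<le> t \<Longrightarrow>
      \<bar>G t s\<bar> \<le> K \<and> \<bar>G1 t s\<bar> \<le> K \<and> \<bar>Gs t s\<bar> \<le> K \<and> \<bar>Gst t s\<bar> \<le> K"
  shows "\<exists>Rs Rt Rts :: real \<Rightarrow> real \<Rightarrow> real. \<exists>M > 0.
     (\<forall>t s. 0 \<le> s \<and> 0 \<le> t \<longrightarrow>
        ((\<lambda>\<sigma>. Rker p G t \<sigma>) has_real_derivative Rs t s) (at s within {0..}) \<and>
        ((\<lambda>\<tau>. Rker p G \<tau> s) has_real_derivative Rt t s) (at t within {0..}) \<and>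
        ((\<lambda>\<tau>. Rs \<tau> s) has_real_derivative Rts t s) (at t within {0..})) \<and>
     (\<forall>t s. 0 \<le> s \<and> s \<le> t \<longrightarrow>
        \<bar>\<omega>^2 * Rker p G t s - Rs t s\<bar> \<le> M * Eker p t s \<and>
        \<bar>\<omega>^2 * Rt t s - Rts t s\<bar> \<le> M * Eker p t s)"
proof -
  define M where "M = (\<omega>^2 + P) * (P * K + K) + (P * K + K)"
  have "0 \<le> P" "0 \<le> K"
    using p_le[of 0] G_le[of 0 0] by auto
  then have "0 \<le> M"
    unfolding M_def by simp
  show ?thesis
  proof (rule exI[of _ "Rker_ds p G Gs"], rule exI[of _ "Rker_dt p G G1"],
      rule exI[of _ "Rker_dtds p G G1 Gs Gst"], rule exI[of _ "M + 1"], intro conjI allI impI)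
    show "M + 1 > 0" using \<open>0 \<le> M\<close> by simp
    fix t s :: real assume "0 \<le> s \<and> 0 \<le> t"
    then show "((\<lambda>\<sigma>. Rker p G t \<sigma>) has_real_derivative Rker_ds p G Gs t s) (at s within {0..})"
      and "((\<lambda>\<tau>. Rker p G \<tau> s) has_real_derivative Rker_dt p G G1 t s) (at t within {0..})"
      and "((\<lambda>\<tau>. Rker_ds p G Gs \<tau> s) has_real_derivative Rker_dtds p G G1 Gs Gst t s)
             (at t within {0..})"
      by (auto intro!: Rker_has_partial_derivatives p_cont G_deriv Gs_deriv Gst_deriv)
  next
    fix t s :: real assume "0 \<le> s \<and> s \<le> t"
    then have "0 \<le> s" "0 \<le> t" by auto
    have "M * Eker p t s \<le> (M + 1) * Eker p t s"
      by (simp add: Eker_def)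
    moreover have "\<bar>\<omega>^2 * Rker p G t s - Rker_ds p G Gs t s\<bar> \<le> M * Eker p t s"
      and "\<bar>\<omega>^2 * Rker_dt p G G1 t s - Rker_dtds p G G1 Gs Gst t s\<bar> \<le> M * Eker p t s"
      using G_le[OF \<open>0 \<le> s\<close> \<open>0 \<le> t\<close>] unfolding M_def
      by (auto intro!: Rker_combinations_le p_le \<open>0 \<le> s\<close> \<open>0 \<le> t\<close>)
    ultimately show "\<bar>\<omega>^2 * Rker p G t s - Rker_ds p G Gs t s\<bar> \<le> (M + 1) * Eker p t s"
      and "\<bar>\<omega>^2 * Rker_dt p G G1 t s - Rker_dtds p G G1 Gs Gst t s\<bar> \<le> (M + 1) * Eker p t s"
      by linarith+
  qed
qed

theorem mainTheorem6:
  fixes \<omega> :: real and p p' :: "real \<Rightarrow> real"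
    and G G1 :: "real \<Rightarrow> real \<Rightarrow> real"
  assumes omega_pos: "\<omega> > 0"
    and p_deriv: "\<And>t. t \<ge> 0 \<Longrightarrow> (p has_real_derivative p' t) (at t within {0..})"
    and p'_cont: "continuous_on {0..} p'"
    and p_pos: "\<And>t. t \<ge> 0 \<Longrightarrow> p t > 0"
    and p'_neg: "\<And>t. t \<ge> 0 \<Longrightarrow> p' t < 0"
    and p_int_infinite: "filterlim (\<lambda>t. integral {0..t} p) at_top at_top"
    and p_sq_int: "(\<lambda>t. (p t)^2) integrable_on {0..}"
    and G_deriv: "\<And>t s. 0 \<le> s \<Longrightarrow> 0 \<le> t \<Longrightarrow>
        ((\<lambda>\<tau>. G \<tau> s) has_real_derivative G1 t s) (at t within {0..})"
    and G1_deriv: "\<And>t s. 0 \<le> s \<Longrightarrow> 0 \<le> t \<Longrightarrow>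
        ((\<lambda>\<tau>. G1 \<tau> s) has_real_derivative (- (\<omega>^2 + qfun p p' t) * G t s)) (at t within {0..})"
    and G_init: "\<And>s. 0 \<le> s \<Longrightarrow> G s s = 0"
    and G1_init: "\<And>s. 0 \<le> s \<Longrightarrow> G1 s s = 1"
  shows "\<exists>Rs Rt Rts :: real \<Rightarrow> real \<Rightarrow> real. \<exists>M > 0.
     (\<forall>t s. 0 \<le> s \<and> 0 \<le> t \<longrightarrow>
        ((\<lambda>\<sigma>. Rker p G t \<sigma>) has_real_derivative Rs t s) (at s within {0..}) \<and>
        ((\<lambda>\<tau>. Rker p G \<tau> s) has_real_derivative Rt t s) (at t within {0..}) \<and>
        ((\<lambda>\<tau>. Rs \<tau> s) has_real_derivative Rts t s) (at t within {0..})) \<and>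
     (\<forall>t s. 0 \<le> s \<and> s \<le> t \<longrightarrow>
        \<bar>\<omega>^2 * Rker p G t s - Rs t s\<bar> \<le> M * Eker p t s \<and>
        \<bar>\<omega>^2 * Rt t s - Rts t s\<bar> \<le> M * Eker p t s)"
proof -
  have p_cont: "continuous_on {0..} p"
    by (rule DERIV_continuous_on[where D = p']) (use p_deriv in auto)
  have p_le: "\<bar>p t\<bar> \<le> p 0" if "0 \<le> t" for t
    using DERIV_nonpos_imp_antimono_atLeast[OF p_deriv _ order_refl that] p'_neg p_pos that
    by (simp add: less_imp_le)
  have sol: "oscillator_solution \<omega> (qfun p p') (\<lambda>t. G t s) (\<lambda>t. G1 t s)" if "0 \<le> s" for s
    unfolding oscillator_solution_def using G_deriv G1_deriv that by auto
  have bounded: "\<exists>B. \<forall>t\<ge>0. \<bar>y t\<bar> \<le> B \<and> \<bar>y' t\<bar> \<le> B"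
    if "oscillator_solution \<omega> (qfun p p') y y'" for y y'
    using qfun_oscillator_solution_bounded[OF that omega_pos p_deriv _ _ p_sq_int] p_pos p'_neg
    by (simp add: less_imp_le)
  obtain Gs Gst K where
    Gs_deriv: "\<And>t s. 0 \<le> s \<Longrightarrow> 0 \<le> t \<Longrightarrow>
      ((\<lambda>\<sigma>. G t \<sigma>) has_real_derivative Gs t s) (at s within {0..})" and
    Gst_deriv: "\<And>t s. 0 \<le> s \<Longrightarrow> 0 \<le> t \<Longrightarrow>
      ((\<lambda>\<tau>. Gs \<tau> s) has_real_derivative Gst t s) (at t within {0..})" and
    G_le: "\<And>t s. 0 \<le> s \<Longrightarrow> 0 \<le> t \<Longrightarrow>
      \<bar>G t s\<bar> \<le> K \<and> \<bar>G1 t s\<bar> \<le> K \<and> \<bar>Gs t s\<bar> \<le> K \<and> \<bar>Gst t s\<bar> \<le> K"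
    using green_function_smooth_bounded[OF sol G_init G1_init bounded] by blast
  show ?thesis
    by (rule Rker_partial_derivatives_bounded[OF p_cont p_le G_deriv Gs_deriv Gst_deriv G_le])
qed

end
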